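(* Define $a(n)$ by $\sum_{n\ge1}a(n)q^n=\frac{1}{1+q}\sum_{n=1}^\infty q^{n(3n+1)/2}(1-q^{2n+1})$. Then for every positive integer $n$, $$a(n)=\begin{cases}-(-1)^{n-\lfloor n\rfloor_p}, & \text{if } R(\lfloor n\rfloor_p) \text{ is even and positive},\\ 0, & \text{if } R(\lfloor n\rfloor_p)\text{ is odd and negative},\\ (-1)^{n-\lfloor n\rfloor_p}, & \text{if } R(\lfloor n\rfloor_p)\text{ is odd and positive},\\ -2(-1)^{n-\lfloor n\rfloor_p}, & \text{if } R(\lfloor n\rfloor_p)\text{ is even and negative}.\end{cases}$$
   Context: $\mathcal{P}=\{m(3m+1)/2:m\in\mathbb{Z}\}$ is the set of (generalized) pentagonal numbers; for $n=m(3m+1)/2\in\mathcal{P}$ put $R(n)=m$ (well defined). $\lfloor n\rfloor_p$ is the largest element of $\mathcal{P}$ that is $\le n$. *)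

theory Defs
  imports "HOL-Computational_Algebra.Formal_Power_Series"
begin

definition pent :: "int \<Rightarrow> int" where
  "pent m = m * (3 * m + 1) div 2"

definition pentagonal :: "int set" where
  "pentagonal = range pent"

definition Rp :: "int \<Rightarrow> int" where
  "Rp n = (THE m. pent m = n)"

definition pfloor :: "int \<Rightarrow> int" where
  "pfloor n = Max {p \<in> pentagonal. p \<le> n}"

(* the series  \<Sum>_{k\<ge>1} q^{k(3k+1)/2} (1 - q^{2k+1}) : coefficient of q^j;
   only k \<le> j can contribute since k(3k+1)/2 \<ge> k *)
definition S_fps :: "rat fps" where
  "S_fps = Abs_fps (\<lambda>j. \<Sum>k\<in>{1..int j}.
      (if pent k = int j then 1 else 0) - (if pent k + 2 * k + 1 = int j then 1 else 0))"

definition A_fps :: "rat fps" where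
  "A_fps = inverse (1 + fps_X) * S_fps"

definition a :: "nat \<Rightarrow> rat" where
  "a n = fps_nth A_fps n"

end

theory Submission
  imports Defs
begin

(*
  Multiplying by 1 + q gives a(n) + a(n - 1) = [q^n] S, and since
  k(3k+1)/2 + 2k + 1 = (-k-1)(3(-k-1)+1)/2 the coefficient [q^n] S is +1 at the
  pentagonal numbers with positive index, -1 at those with index at most -2, and 0
  elsewhere. As 24 m(3m+1)/2 + 1 = (6m+1)^2, the pentagonal numbers are ordered by
  |6m+1|, so the index of the one following m(3m+1)/2 is -m for m < 0 and -m-1 for
  m >= 0. Hence a alternates in sign between consecutive pentagonal numbers, and the
  value at the start of each such block is the jump of S minus the value at the end
  of the previous block; following the order 0, -1, 1, -2, 2, ... this yields the
  four cases of the theorem.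
*)

lemma pent_double: "2 * pent m = m * (3 * m + 1)"
proof -
  have "even (m * (3 * m + 1))" by (cases "even m") auto
  then show ?thesis unfolding pent_def by simp
qed

lemma pent_square: "24 * pent m + 1 = (6 * m + 1)\<^sup>2"
  using pent_double[of m] by (simp add: power2_eq_square algebra_simps)

lemma pent_le_pent_iff: "pent i \<le> pent j \<longleftrightarrow> \<bar>6 * i + 1\<bar> \<le> \<bar>6 * j + 1\<bar>"
proof -
  have "pent i \<le> pent j \<longleftrightarrow> (6 * i + 1)\<^sup>2 \<le> (6 * j + 1)\<^sup>2"
    using pent_square[of i] pent_square[of j] by linarith
  also have "\<dots> \<longleftrightarrow> \<bar>6 * i + 1\<bar> \<le> \<bar>6 * j + 1\<bar>"
    by (simp add: abs_le_square_iff)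
  finally show ?thesis .
qed

lemma pent_less_pent_iff: "pent i < pent j \<longleftrightarrow> \<bar>6 * i + 1\<bar> < \<bar>6 * j + 1\<bar>"
  using pent_le_pent_iff[of j i] by linarith

lemma pent_eq_pent_iff: "pent i = pent j \<longleftrightarrow> i = j"
proof
  assume "pent i = pent j"
  then have "\<bar>6 * i + 1\<bar> = \<bar>6 * j + 1\<bar>"
    using pent_le_pent_iff[of i j] pent_le_pent_iff[of j i] by linarith
  then show "i = j"
    by (cases "i < 0"; cases "j < 0"; simp add: abs_if; presburger)
qed simp

lemma pent_eq_0_iff: "pent m = 0 \<longleftrightarrow> m = 0"
  using pent_eq_pent_iff[of m 0] by (simp add: pent_def)

lemma pent_nonneg: "pent m \<ge> 0"
  using pent_square[of m] by (smt (verit) zero_le_power2)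

lemma abs_le_pent: "\<bar>m\<bar> \<le> pent m"
proof -
  have "2 * \<bar>m\<bar> \<le> \<bar>m\<bar> * \<bar>3 * m + 1\<bar>"
    by (cases "m = 0") (auto intro: mult_left_mono)
  also have "\<dots> = 2 * pent m"
    using pent_double[of m] pent_nonneg[of m] by (simp add: abs_mult [symmetric])
  finally show ?thesis by simp
qed

lemma pent_minus: "pent (- m) = pent m - m"
  using pent_double[of m] pent_double[of "- m"] by (simp add: algebra_simps)

lemma pent_minus_minus_one: "pent (- m - 1) = pent m + 2 * m + 1"
  using pent_double[of m] pent_double[of "- m - 1"] by (simp add: algebra_simps)

lemma Rp_pent: "Rp (pent m) = m"
  unfolding Rp_def using pent_eq_pent_iff by auto

definition pent_succ :: "int \<Rightarrow> int" where
  "pent_succ m = (if m < 0 then - m else - m - 1)"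

lemma pent_less_pent_succ: "pent m < pent (pent_succ m)"
  unfolding pent_less_pent_iff pent_succ_def by (simp add: abs_if)

(* The numbers |6j+1| are exactly the positive integers congruent to 1 or 5 mod 6. *)
lemma pent_succ_le_pent: "pent m < pent j \<Longrightarrow> pent (pent_succ m) \<le> pent j"
  unfolding pent_less_pent_iff pent_le_pent_iff pent_succ_def
  by (cases "m < 0"; cases "j < 0"; simp add: abs_if; presburger)

lemma pent_succ_surj: "m \<noteq> 0 \<Longrightarrow> \<exists>k. pent_succ k = m"
proof (cases "m > 0")
  case True
  then have "pent_succ (- m) = m" by (simp add: pent_succ_def)
  then show ?thesis by blast
next
  case False
  assume "m \<noteq> 0"
  with False have "pent_succ (- m - 1) = m" by (simp add: pent_succ_def)
  then show ?thesis by blast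
qed

lemma ex_pent_block: "\<exists>m. pent m \<le> int n \<and> int n < pent (pent_succ m)"
proof (induction n)
  case 0
  show ?case by (intro exI[of _ 0]) (simp add: pent_def pent_succ_def)
next
  case (Suc n)
  then obtain m where m: "pent m \<le> int n" "int n < pent (pent_succ m)" by blast
  show ?case
  proof (cases "int (Suc n) < pent (pent_succ m)")
    case True
    with m show ?thesis by (intro exI[of _ m]) simp
  next
    case False
    with m pent_less_pent_succ[of "pent_succ m"] show ?thesis
      by (intro exI[of _ "pent_succ m"]) simp
  qed
qed

lemma pfloor_eq:
  assumes "pent m \<le> x" "x < pent (pent_succ m)"
  shows "pfloor x = pent m"
  unfolding pfloor_def
proof (rule Max_eqI)
  have "{p \<in> pentagonal. p \<le> x} \<subseteq> {0..x}"
    using pent_nonneg by (auto simp: pentagonal_def)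
  then show "finite {p \<in> pentagonal. p \<le> x}"
    by (rule finite_subset) simp
  show "pent m \<in> {p \<in> pentagonal. p \<le> x}"
    using assms by (auto simp: pentagonal_def)
  fix y assume "y \<in> {p \<in> pentagonal. p \<le> x}"
  then obtain j where "y = pent j" "pent j \<le> x" by (auto simp: pentagonal_def)
  with assms pent_succ_le_pent[of m j] show "y \<le> pent m" by force
qed

lemma fps_nth_S_fps_pent:
  "fps_nth S_fps (nat (pent m)) = (if m > 0 then 1 else if m < -1 then -1 else 0)"
proof -
  have shifted: "pent k + 2 * k + 1 = pent m \<longleftrightarrow> k = - m - 1" for k
    unfolding pent_minus_minus_one [symmetric] pent_eq_pent_iff by arith
  have "fps_nth S_fps (nat (pent m)) =
      (\<Sum>k\<in>{1..pent m}. (if k = m then 1 else 0) - (if k = - m - 1 then (1::rat) else 0))"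
    unfolding S_fps_def using pent_nonneg[of m] by (simp add: pent_eq_pent_iff shifted)
  also have "\<dots> = (if m > 0 then 1 else if m < -1 then -1 else 0)"
    using abs_le_pent[of m] by (simp add: sum_subtractf) arith
  finally show ?thesis .
qed

lemma fps_nth_S_fps_not_pent:
  assumes "int n \<notin> range pent"
  shows "fps_nth S_fps n = 0"
proof -
  have "pent k \<noteq> int n" for k
    using assms by (metis rangeI)
  then show ?thesis
    unfolding S_fps_def by (simp add: pent_minus_minus_one [symmetric])
qed

lemma fps_nth_inverse_one_plus_X_mult:
  fixes f :: "'a::field fps"
  shows "fps_nth (inverse (1 + fps_X) * f) 0 = fps_nth f 0"
    and "fps_nth (inverse (1 + fps_X) * f) (Suc n) =
           fps_nth f (Suc n) - fps_nth (inverse (1 + fps_X) * f) n"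
proof -
  define g where "g = inverse (1 + fps_X) * f"
  have "(1 + fps_X) * inverse (1 + fps_X) = (1 :: 'a fps)"
    by (rule inverse_mult_eq_1') simp
  then have "f = (1 + fps_X) * g"
    unfolding g_def by (simp only: mult.assoc [symmetric] mult_1)
  then have "f = g + fps_X * g"
    by (simp add: distrib_right)
  then have "fps_nth f 0 = fps_nth g 0" "fps_nth f (Suc n) = fps_nth g (Suc n) + fps_nth g n"
    by simp_all
  then show "fps_nth g 0 = fps_nth f 0" "fps_nth g (Suc n) = fps_nth f (Suc n) - fps_nth g n"
    by simp_all
qed

lemma a_0: "a 0 = 0"
  unfolding a_def A_fps_def fps_nth_inverse_one_plus_X_mult by (simp add: S_fps_def)

lemma a_Suc: "a (Suc n) = fps_nth S_fps (Suc n) - a n"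
  unfolding a_def A_fps_def by (rule fps_nth_inverse_one_plus_X_mult)

definition block_value :: "int \<Rightarrow> rat" where
  "block_value m =
    (if m > 0 then (if even m then -1 else 1) else if m < 0 then (if even m then -2 else 0) else 0)"

lemma block_value_pent_succ:
  "block_value (pent_succ m) =
     fps_nth S_fps (nat (pent (pent_succ m)))
     - block_value m * (-1) ^ nat (pent (pent_succ m) - 1 - pent m)"
proof (cases "m < 0")
  case True
  have exponent: "pent (- m) - 1 - pent m = - m - 1"
    using pent_minus[of "- m"] by simp
  have "(-1::rat) ^ nat (pent (- m) - 1 - pent m) = (if even m then -1 else 1)"
    unfolding exponent using True by (simp add: minus_one_power_iff even_nat_iff)
  with True show ?thesis
    by (simp add: pent_succ_def fps_nth_S_fps_pent block_value_def)
next
  case False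
  have "pent (- m - 1) - 1 - pent m = 2 * m"
    using pent_minus_minus_one[of m] by simp
  with False show ?thesis
    by (auto simp: pent_succ_def fps_nth_S_fps_pent block_value_def nat_mult_distrib)
qed

lemma a_pent_block:
  assumes "pent m \<le> int n" "int n < pent (pent_succ m)"
  shows "a n = block_value m * (-1) ^ nat (int n - pent m)"
  using assms
proof (induction n arbitrary: m)
  case 0
  then have "m = 0" using pent_nonneg[of m] pent_eq_0_iff by simp
  then show ?case by (simp add: a_0 block_value_def)
next
  case (Suc n)
  show ?case
  proof (cases "pent m \<le> int n")
    case True
    have "int n < pent (pent_succ m)" using Suc.prems(2) by simp
    with True have IH: "a n = block_value m * (-1) ^ nat (int n - pent m)"
      by (rule Suc.IH)
    have "int (Suc n) \<noteq> pent j" for j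
    proof
      assume "int (Suc n) = pent j"
      then show False
        using Suc.prems(2) True pent_succ_le_pent[of m j] by linarith
    qed
    then have "fps_nth S_fps (Suc n) = 0"
      by (intro fps_nth_S_fps_not_pent) auto
    then have "a (Suc n) = - a n" by (simp add: a_Suc)
    moreover have "nat (int (Suc n) - pent m) = Suc (nat (int n - pent m))"
      using True by simp
    ultimately show ?thesis using IH by simp
  next
    case False
    then have start: "pent m = int (Suc n)" using Suc.prems(1) by simp
    then have "m \<noteq> 0" by (auto simp: pent_def)
    then obtain k where k: "pent_succ k = m" using pent_succ_surj by blast
    have "pent k \<le> int n" "int n < pent (pent_succ k)"
      using pent_less_pent_succ[of k] start k by simp_all
    then have end_of_previous: "a n = block_value k * (-1) ^ nat (pent m - 1 - pent k)"
      using start by (simp add: Suc.IH)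
    have "a (Suc n) = fps_nth S_fps (nat (pent m)) - a n"
      using a_Suc[of n] by (simp add: start del: of_nat_Suc)
    also have "\<dots> = block_value m"
      using block_value_pent_succ[of k] end_of_previous by (simp add: k)
    finally show ?thesis using start by simp
  qed
qed

theorem lemma5p2:
  fixes n :: nat
  assumes "n \<ge> 1"
  shows "a n =
    (let p = pfloor (int n); r = Rp p; s = (-1::rat) ^ nat (int n - p) in
      if even r \<and> r > 0 then - s
      else if odd r \<and> r < 0 then 0
      else if odd r \<and> r > 0 then s
      else if even r \<and> r < 0 then -2 * s
      else undefined)"
proof -
  obtain m where m: "pent m \<le> int n" "int n < pent (pent_succ m)"
    using ex_pent_block by blast
  have "m \<noteq> 0"
    using m assms by (auto simp: pent_def pent_succ_def)
  then show ?thesis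
    unfolding a_pent_block[OF m] Let_def pfloor_eq[OF m] Rp_pent
    by (auto simp: block_value_def)
qed

end
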